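(* Let $x\ge1$ be an integer and $u,v\in\mathbf{C}$ with $\Re u>1$ and $\Re v>1$. Then \[ J_x(u,v)=\frac{x^{1-u-v}}{u+v-1}+\int_x^\infty\alpha^{-u}\zeta_1(v,\alpha)\,d\alpha+\int_x^\infty\alpha^{-v}\zeta_1(u,\alpha)\,d\alpha, \] with both integrals absolutely convergent.
   Context: For an integer $x\geq 0$, $\alpha>0$ and $\Re s>1$, $\zeta_x(s,\alpha)=\sum_{n\geq x}(n+\alpha)^{-s}$. $J_x(u,v)=\int_0^1\zeta_x(u,\alpha)\zeta_x(v,\alpha)\,d\alpha$. *)

theory Defs
  imports "HOL-Analysis.Analysis"
begin

definition zeta_tail :: "nat \<Rightarrow> complex \<Rightarrow> real \<Rightarrow> complex" where
  "zeta_tail x s \<alpha> = (\<Sum>k. (complex_of_real (real (k + x) + \<alpha>)) powr (- s))"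

definition J_int :: "nat \<Rightarrow> complex \<Rightarrow> complex \<Rightarrow> complex" where
  "J_int x u v = (LINT \<alpha>:{0..1}|lborel. zeta_tail x u \<alpha> * zeta_tail x v \<alpha>)"

end

theory Submission
  imports Defs
begin

text \<open>Splitting off the first term of each truncated zeta function shows that, for \<open>n \<ge> 1\<close>,
  \<open>0 \<le> \<alpha>\<close> and \<open>\<beta> = n + \<alpha>\<close>,
  \<open>\<zeta>_n(u,\<alpha>) \<zeta>_n(v,\<alpha>) - \<zeta>_(n+1)(u,\<alpha>) \<zeta>_(n+1)(v,\<alpha>) = \<beta>^(-u-v) + \<beta>^(-u) \<zeta>_1(v,\<beta>) + \<beta>^(-v) \<zeta>_1(u,\<beta>)\<close>.
  Integrating over \<open>\<alpha> \<in> [0,1]\<close> writes \<open>J_n - J_(n+1)\<close> as the integral of the right-hand side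
  over \<open>[n, n+1]\<close>, so \<open>J_n\<close> minus the claimed expansion is the same for all \<open>n \<ge> x\<close>. Both \<open>J_n\<close>
  and the expansion tend to \<open>0\<close>, because \<open>|\<zeta>_n(s,\<alpha>)|\<close> is bounded by the tail
  \<open>\<Sum>k\<ge>n. k^(-Re s)\<close> of a convergent series.\<close>

definition zeta_majorant :: "real \<Rightarrow> nat \<Rightarrow> real" where
  "zeta_majorant \<sigma> n = (\<Sum>k. real (k + n) powr (- \<sigma>))"

lemma summable_powr_shifted:
  assumes "\<sigma> > 1"
  shows "summable (\<lambda>k. real (k + n) powr (- \<sigma>))"
proof -
  have "summable (\<lambda>k. real k powr (- \<sigma>))"
    using assms by (subst summable_real_powr_iff) auto
  then show ?thesis
    using summable_iff_shift[of "\<lambda>k. real k powr (- \<sigma>)" n] by simp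
qed

lemma zeta_majorant_nonneg: "\<sigma> > 1 \<Longrightarrow> zeta_majorant \<sigma> n \<ge> 0"
  unfolding zeta_majorant_def by (intro suminf_nonneg summable_powr_shifted) auto

lemma zeta_majorant_LIMSEQ_0:
  assumes "\<sigma> > 1"
  shows "zeta_majorant \<sigma> \<longlonglongrightarrow> 0"
proof -
  let ?f = "\<lambda>k. real k powr (- \<sigma>)"
  have summable: "summable ?f"
    using summable_powr_shifted[OF assms, of 0] by simp
  have "zeta_majorant \<sigma> = (\<lambda>n. suminf ?f - (\<Sum>i<n. ?f i))"
    using suminf_split_initial_segment[OF summable] unfolding zeta_majorant_def
    by (auto simp: algebra_simps)
  moreover have "(\<lambda>n. suminf ?f - (\<Sum>i<n. ?f i)) \<longlonglongrightarrow> suminf ?f - suminf ?f"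
    by (intro tendsto_intros summable_LIMSEQ summable)
  ultimately show ?thesis by simp
qed

lemma norm_zeta_tail_term_le:
  assumes "n \<ge> 1" "\<alpha> \<ge> 0" "Re s \<ge> 0"
  shows "norm (complex_of_real (real (k + n) + \<alpha>) powr (- s)) \<le> real (k + n) powr (- Re s)"
  using assms by (subst norm_powr_real_powr) (auto intro!: powr_mono2')

lemma summable_norm_zeta_tail_terms:
  assumes "n \<ge> 1" "\<alpha> \<ge> 0" "Re s > 1"
  shows "summable (\<lambda>k. norm (complex_of_real (real (k + n) + \<alpha>) powr (- s)))"
  by (rule summable_comparison_test[OF _ summable_powr_shifted[OF assms(3), of n]])
     (use norm_zeta_tail_term_le[OF assms(1,2)] assms(3) in auto)

lemma norm_zeta_tail_le:
  assumes "n \<ge> 1" "\<alpha> \<ge> 0" "Re s > 1"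
  shows "norm (zeta_tail n s \<alpha>) \<le> zeta_majorant (Re s) n"
proof -
  have "norm (zeta_tail n s \<alpha>) \<le> (\<Sum>k. norm (complex_of_real (real (k + n) + \<alpha>) powr (- s)))"
    unfolding zeta_tail_def by (rule summable_norm[OF summable_norm_zeta_tail_terms[OF assms]])
  also have "\<dots> \<le> zeta_majorant (Re s) n"
    unfolding zeta_majorant_def
    by (intro suminf_le summable_norm_zeta_tail_terms summable_powr_shifted norm_zeta_tail_term_le)
       (use assms in auto)
  finally show ?thesis .
qed

lemma zeta_tail_unfold:
  assumes "n \<ge> 1" "\<alpha> \<ge> 0" "Re s > 1"
  shows "zeta_tail n s \<alpha> = complex_of_real (real n + \<alpha>) powr (- s) + zeta_tail (Suc n) s \<alpha>"
proof -
  have "summable (\<lambda>k. complex_of_real (real (k + n) + \<alpha>) powr (- s))"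
    by (rule summable_norm_cancel[OF summable_norm_zeta_tail_terms[OF assms]])
  from suminf_split_head[OF this] show ?thesis
    unfolding zeta_tail_def by (simp add: algebra_simps)
qed

text \<open>Not a simp rule: as \<open>1 = Suc 0\<close>, it rewrites its own right-hand side.\<close>
lemma zeta_tail_Suc_eq: "zeta_tail (Suc n) s \<alpha> = zeta_tail 1 s (real n + \<alpha>)"
  unfolding zeta_tail_def by (simp add: algebra_simps)

lemma continuous_on_zeta_tail:
  assumes "n \<ge> 1" "Re s > 1"
  shows "continuous_on {0..} (zeta_tail n s)"
proof -
  have "uniform_limit {0..} (\<lambda>m \<alpha>. \<Sum>k<m. complex_of_real (real (k + n) + \<alpha>) powr (- s))
          (\<lambda>\<alpha>. \<Sum>k. complex_of_real (real (k + n) + \<alpha>) powr (- s)) sequentially"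
    by (rule Weierstrass_m_test[OF _ summable_powr_shifted[OF assms(2), of n]])
       (use norm_zeta_tail_term_le[OF assms(1)] assms(2) in auto)
  moreover have "continuous_on {0..} (\<lambda>\<alpha>. \<Sum>k<m. complex_of_real (real (k + n) + \<alpha>) powr (- s))"
    for m
    using assms by (intro continuous_intros) (auto simp: complex_eq_iff)
  ultimately show ?thesis
    unfolding zeta_tail_def[abs_def] by (intro uniform_limit_theorem) auto
qed

lemma set_integrable_powr_atLeast:
  fixes a \<sigma> :: real
  assumes "a > 0" "\<sigma> > 1"
  shows "set_integrable lborel {a..} (\<lambda>\<beta>. \<beta> powr (- \<sigma>))"
proof -
  have "(\<lambda>\<beta>. \<beta> powr (- \<sigma>)) integrable_on {a..}"
    using has_integral_powr_to_inf[of "- \<sigma>" a] assms by auto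
  then have "(\<lambda>\<beta>. \<beta> powr (- \<sigma>)) absolutely_integrable_on {a..}"
    by (rule nonnegative_absolutely_integrable_1) auto
  moreover have "(\<lambda>\<beta>. indicator {a..} \<beta> *\<^sub>R \<beta> powr (- \<sigma>)) \<in> borel_measurable lborel"
    using assms by (auto intro!: borel_measurable_continuous_on_indicator continuous_intros)
  ultimately show ?thesis
    unfolding absolutely_integrable_on_def set_integrable_def
    using integrable_completion by blast
qed

lemma set_integral_shift_unit_interval:
  fixes f :: "real \<Rightarrow> complex"
  assumes "continuous_on {c..c+1} f"
  shows "(LINT \<alpha>:{0..1}|lborel. f (c + \<alpha>)) = (LINT \<beta>:{c..c+1}|lborel. f \<beta>)"
proof -
  have "continuous_on {0..1} (\<lambda>\<alpha>. f (c + \<alpha>))"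
    by (rule continuous_on_compose2[OF assms]) (auto intro!: continuous_intros)
  then have "(LINT \<alpha>:{0..1}|lborel. f (c + \<alpha>)) = integral {0..1} (\<lambda>\<alpha>. f (c + \<alpha>))"
    by (intro set_borel_integral_eq_integral borel_integrable_atLeastAtMost')
  also have "\<dots> = integral {c..c+1} f"
    using integral_shift_Icc_real[of 0 1 f c] by (simp add: o_def add.commute)
  also have "\<dots> = (LINT \<beta>:{c..c+1}|lborel. f \<beta>)"
    by (intro set_borel_integral_eq_integral(2)[symmetric] borel_integrable_atLeastAtMost' assms)
  finally show ?thesis .
qed

lemma set_integral_complex_powr_Icc:
  fixes w :: complex and a b :: real
  assumes "0 < a" "a \<le> b" "w \<noteq> 1"
  shows "(LINT \<beta>:{a..b}|lborel. complex_of_real \<beta> powr (- w)) =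
           complex_of_real a powr (1 - w) / (w - 1) - complex_of_real b powr (1 - w) / (w - 1)"
proof -
  define F where "F t = complex_of_real t powr (1 - w) / (1 - w)" for t :: real
  have "(F has_vector_derivative complex_of_real t powr (- w)) (at t within {a..b})"
    if "a \<le> t" for t
  proof -
    have "((\<lambda>z. z powr (1 - w) / (1 - w)) has_field_derivative
            (1 - w) * complex_of_real t powr (1 - w - 1) / (1 - w)) (at (complex_of_real t))"
      using that assms
      by (intro derivative_eq_intros has_field_derivative_powr) (auto simp: complex_nonpos_Reals_iff)
    then show ?thesis
      unfolding F_def using assms by (intro has_vector_derivative_real_field) simp
  qed
  moreover have "continuous_on {a..b} (\<lambda>t. complex_of_real t powr (- w))"
    using assms by (intro continuous_intros) (auto simp: complex_nonpos_Reals_iff)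
  ultimately have "(LINT \<beta>:{a..b}|lborel. complex_of_real \<beta> powr (- w)) = F b - F a"
    unfolding set_lebesgue_integral_def using assms by (intro integral_FTC_atLeastAtMost) auto
  then show ?thesis
    unfolding F_def using assms by (simp add: field_simps)
qed

lemma set_integral_atLeast_split:
  fixes f :: "real \<Rightarrow> 'a::{banach, second_countable_topology}"
  assumes "set_integrable lborel {a..} f" "a \<le> b"
  shows "(LINT \<beta>:{a..}|lborel. f \<beta>) = (LINT \<beta>:{a..b}|lborel. f \<beta>) + (LINT \<beta>:{b..}|lborel. f \<beta>)"
proof -
  have "{a..} = {a..b} \<union> {b..}" using assms(2) by auto
  moreover have "AE \<beta> in lborel. \<not> (\<beta> \<in> {a..b} \<and> \<beta> \<in> {b..})"
    using AE_lborel_singleton[of b] by eventually_elim auto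
  moreover have "set_integrable lborel {a..b} f" "set_integrable lborel {b..} f"
    using assms by (auto elim!: set_integrable_subset)
  ultimately show ?thesis
    by (simp add: set_integral_Un_AE)
qed

lemma set_integral_atLeast_LIMSEQ_0:
  fixes f :: "real \<Rightarrow> 'a::{banach, second_countable_topology}"
  assumes "set_integrable lborel {a..} f" "\<And>n. X n \<ge> a" "filterlim X at_top sequentially"
  shows "(\<lambda>n. LINT \<beta>:{X n..}|lborel. f \<beta>) \<longlonglongrightarrow> 0"
proof -
  have "(\<lambda>n. integral\<^sup>L lborel (\<lambda>\<beta>. indicator {X n..} \<beta> *\<^sub>R f \<beta>)) \<longlonglongrightarrow> integral\<^sup>L lborel (\<lambda>_ :: real. 0)"
  proof (rule Bochner_Integration.integral_dominated_convergence)
    show "integrable lborel (\<lambda>\<beta>. norm (indicator {a..} \<beta> *\<^sub>R f \<beta>))"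
      using assms(1) unfolding set_integrable_def by (rule integrable_norm)
    show "(\<lambda>\<beta>. indicator {X n..} \<beta> *\<^sub>R f \<beta>) \<in> borel_measurable lborel" for n
      using set_integrable_subset[OF assms(1), of "{X n..}"] assms(2)[of n]
      unfolding set_integrable_def by auto
    show "AE \<beta> in lborel. norm (indicator {X n..} \<beta> *\<^sub>R f \<beta>) \<le> norm (indicator {a..} \<beta> *\<^sub>R f \<beta>)"
      for n
      using assms(2)[of n] by (intro AE_I2) (auto split: split_indicator)
    show "AE \<beta> in lborel. (\<lambda>n. indicator {X n..} \<beta> *\<^sub>R f \<beta>) \<longlonglongrightarrow> 0"
    proof (intro AE_I2 tendsto_eventually)
      fix \<beta> :: real
      show "\<forall>\<^sub>F n in sequentially. indicator {X n..} \<beta> *\<^sub>R f \<beta> = 0"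
        using filterlim_at_top_dense[THEN iffD1, OF assms(3), rule_format, of \<beta>]
        by eventually_elim (auto split: split_indicator)
    qed
  qed simp
  then show ?thesis unfolding set_lebesgue_integral_def by simp
qed

definition zeta_cross :: "complex \<Rightarrow> complex \<Rightarrow> real \<Rightarrow> complex" where
  "zeta_cross u v \<beta> = complex_of_real \<beta> powr (- u) * zeta_tail 1 v \<beta>"

lemma continuous_on_zeta_cross:
  assumes "Re v > 1"
  shows "continuous_on {0<..} (zeta_cross u v)"
  unfolding zeta_cross_def[abs_def]
  by (intro continuous_intros continuous_on_subset[OF continuous_on_zeta_tail[OF _ assms]])
     (auto simp: complex_nonpos_Reals_iff)

lemma norm_zeta_cross_le:
  assumes "Re v > 1" "\<beta> > 0"
  shows "norm (zeta_cross u v \<beta>) \<le> \<beta> powr (- Re u) * zeta_majorant (Re v) 1"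
  unfolding zeta_cross_def norm_mult using assms
  by (subst norm_powr_real_powr) (auto intro!: mult_left_mono norm_zeta_tail_le)

lemma set_integrable_zeta_cross:
  assumes "Re u > 1" "Re v > 1" "c > 0"
  shows "set_integrable lborel {c..} (zeta_cross u v)"
proof (rule set_integrable_bound)
  show "set_integrable lborel {c..} (\<lambda>\<beta>. \<beta> powr (- Re u) * zeta_majorant (Re v) 1)"
    using set_integrable_powr_atLeast assms by auto
  have "continuous_on {c..} (zeta_cross u v)"
    by (rule continuous_on_subset[OF continuous_on_zeta_cross[OF assms(2)]]) (use assms(3) in auto)
  then show "set_borel_measurable lborel {c..} (zeta_cross u v)"
    unfolding set_borel_measurable_def by (auto intro: borel_measurable_continuous_on_indicator)
  show "AE \<beta> in lborel. \<beta> \<in> {c..} \<longrightarrow>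
          norm (zeta_cross u v \<beta>) \<le> norm (\<beta> powr (- Re u) * zeta_majorant (Re v) 1)"
    using assms norm_zeta_cross_le zeta_majorant_nonneg by (intro AE_I2) force
qed

lemma zeta_tail_product_unfold:
  assumes "n \<ge> 1" "\<alpha> \<ge> 0" "Re u > 1" "Re v > 1"
  shows "zeta_tail n u \<alpha> * zeta_tail n v \<alpha> =
           complex_of_real (real n + \<alpha>) powr (- (u + v))
           + zeta_cross u v (real n + \<alpha>) + zeta_cross v u (real n + \<alpha>)
           + zeta_tail (Suc n) u \<alpha> * zeta_tail (Suc n) v \<alpha>"
proof -
  define a b where "a = complex_of_real (real n + \<alpha>) powr (- u)"
    and "b = complex_of_real (real n + \<alpha>) powr (- v)"
  define A B where "A = zeta_tail (Suc n) u \<alpha>" and "B = zeta_tail (Suc n) v \<alpha>"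
  have powr_sum: "complex_of_real (real n + \<alpha>) powr (- (u + v)) = a * b"
    unfolding a_def b_def by (simp add: powr_add[symmetric])
  have cross: "zeta_cross u v (real n + \<alpha>) = a * B" "zeta_cross v u (real n + \<alpha>) = b * A"
    unfolding zeta_cross_def a_def b_def A_def B_def zeta_tail_Suc_eq[of n] by simp_all
  have unfold: "zeta_tail n u \<alpha> = a + A" "zeta_tail n v \<alpha> = b + B"
    unfolding a_def b_def A_def B_def using assms by (simp_all add: zeta_tail_unfold[of n])
  show ?thesis
    unfolding powr_sum cross unfold A_def[symmetric] B_def[symmetric] by (simp add: algebra_simps)
qed

lemma continuous_on_zeta_tail_product:
  assumes "n \<ge> 1" "Re u > 1" "Re v > 1"
  shows "continuous_on {0..1} (\<lambda>\<alpha>. zeta_tail n u \<alpha> * zeta_tail n v \<alpha>)"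
  by (intro continuous_intros continuous_on_subset[OF continuous_on_zeta_tail[OF assms(1,2)]]
        continuous_on_subset[OF continuous_on_zeta_tail[OF assms(1,3)]]) auto

lemma J_int_unfold:
  assumes "n \<ge> 1" "Re u > 1" "Re v > 1"
  shows "J_int n u v = (LINT \<beta>:{real n..real n + 1}|lborel. complex_of_real \<beta> powr (- (u + v)))
           + (LINT \<beta>:{real n..real n + 1}|lborel. zeta_cross u v \<beta>)
           + (LINT \<beta>:{real n..real n + 1}|lborel. zeta_cross v u \<beta>) + J_int (Suc n) u v"
proof -
  define k where "k \<beta> = complex_of_real \<beta> powr (- (u + v)) + zeta_cross u v \<beta> + zeta_cross v u \<beta>"
    for \<beta> :: real
  have cont: "continuous_on {real n..real n + 1} (\<lambda>\<beta>. complex_of_real \<beta> powr (- (u + v)))"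
    "continuous_on {real n..real n + 1} (zeta_cross u v)"
    "continuous_on {real n..real n + 1} (zeta_cross v u)"
    using assms by (auto intro!: continuous_intros continuous_on_subset[OF continuous_on_zeta_cross]
                         simp: complex_nonpos_Reals_iff)
  note integrable = cont[THEN borel_integrable_atLeastAtMost']
  have cont_k: "continuous_on {real n..real n + 1} k"
    unfolding k_def[abs_def] by (intro continuous_intros cont)
  have "J_int n u v = (LINT \<alpha>:{0..1}|lborel. k (real n + \<alpha>) + zeta_tail (Suc n) u \<alpha> * zeta_tail (Suc n) v \<alpha>)"
    unfolding J_int_def k_def
    by (rule set_lebesgue_integral_cong) (use zeta_tail_product_unfold[OF assms(1) _ assms(2,3)] in auto)
  also have "\<dots> = (LINT \<alpha>:{0..1}|lborel. k (real n + \<alpha>)) + J_int (Suc n) u v"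
    unfolding J_int_def using assms
    by (intro set_integral_add(2) borel_integrable_atLeastAtMost' continuous_on_zeta_tail_product
        continuous_on_compose2[OF cont_k]) (auto intro!: continuous_intros)
  also have "(LINT \<alpha>:{0..1}|lborel. k (real n + \<alpha>)) = (LINT \<beta>:{real n..real n + 1}|lborel. k \<beta>)"
    by (rule set_integral_shift_unit_interval[OF cont_k])
  also have "\<dots> = (LINT \<beta>:{real n..real n + 1}|lborel. complex_of_real \<beta> powr (- (u + v)))
           + (LINT \<beta>:{real n..real n + 1}|lborel. zeta_cross u v \<beta>)
           + (LINT \<beta>:{real n..real n + 1}|lborel. zeta_cross v u \<beta>)"
    unfolding k_def
    by (simp only: set_integral_add(2)[OF set_integral_add(1)[OF integrable(1,2)] integrable(3)]
        set_integral_add(2)[OF integrable(1,2)])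
  finally show ?thesis .
qed

lemma norm_J_int_le:
  assumes "n \<ge> 1" "Re u > 1" "Re v > 1"
  shows "norm (J_int n u v) \<le> zeta_majorant (Re u) n * zeta_majorant (Re v) n"
proof -
  have cont: "continuous_on {0..1} (\<lambda>\<alpha>. zeta_tail n u \<alpha> * zeta_tail n v \<alpha>)"
    by (rule continuous_on_zeta_tail_product[OF assms])
  have "norm (J_int n u v) \<le> (LINT \<alpha>:{0..1}|lborel. norm (zeta_tail n u \<alpha> * zeta_tail n v \<alpha>))"
    unfolding J_int_def by (intro set_integral_norm_bound borel_integrable_atLeastAtMost' cont)
  also have "\<dots> \<le> (LINT \<alpha>::real:{0..1}|lborel. zeta_majorant (Re u) n * zeta_majorant (Re v) n)"
    using assms
    by (intro set_integral_mono borel_integrable_atLeastAtMost' continuous_intros cont)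
       (auto simp: norm_mult intro!: mult_mono norm_zeta_tail_le zeta_majorant_nonneg)
  also have "\<dots> = zeta_majorant (Re u) n * zeta_majorant (Re v) n"
    by (subst set_integral_const) auto
  finally show ?thesis .
qed

lemma J_int_LIMSEQ_0:
  assumes "Re u > 1" "Re v > 1"
  shows "(\<lambda>n. J_int n u v) \<longlonglongrightarrow> 0"
proof (rule tendsto_norm_zero_cancel, rule Lim_null_comparison)
  show "\<forall>\<^sub>F n in sequentially. norm (norm (J_int n u v)) \<le> zeta_majorant (Re u) n * zeta_majorant (Re v) n"
    using eventually_ge_at_top[of 1] by eventually_elim (use norm_J_int_le assms in auto)
  show "(\<lambda>n. zeta_majorant (Re u) n * zeta_majorant (Re v) n) \<longlonglongrightarrow> 0"
    using tendsto_mult[OF zeta_majorant_LIMSEQ_0 zeta_majorant_LIMSEQ_0] assms by simp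
qed

definition J_expansion :: "nat \<Rightarrow> complex \<Rightarrow> complex \<Rightarrow> complex" where
  "J_expansion n u v = of_nat n powr (1 - u - v) / (u + v - 1)
     + (LINT \<beta>:{real n..}|lborel. zeta_cross u v \<beta>) + (LINT \<beta>:{real n..}|lborel. zeta_cross v u \<beta>)"

lemma J_int_minus_expansion_Suc:
  assumes "n \<ge> 1" "Re u > 1" "Re v > 1"
  shows "J_int (Suc n) u v - J_expansion (Suc n) u v = J_int n u v - J_expansion n u v"
proof -
  have "u + v \<noteq> 1" using assms by (auto simp: complex_eq_iff)
  then have "(LINT \<beta>:{real n..real n + 1}|lborel. complex_of_real \<beta> powr (- (u + v))) =
               of_nat n powr (1 - u - v) / (u + v - 1) - of_nat (Suc n) powr (1 - u - v) / (u + v - 1)"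
    using assms set_integral_complex_powr_Icc[of "real n" "real n + 1" "u + v"]
    by (simp add: diff_diff_eq add.commute)
  moreover have "(LINT \<beta>:{real n..}|lborel. zeta_cross a b \<beta>) =
      (LINT \<beta>:{real n..real n + 1}|lborel. zeta_cross a b \<beta>) + (LINT \<beta>:{real (Suc n)..}|lborel. zeta_cross a b \<beta>)"
    if "Re a > 1" "Re b > 1" for a b
    using set_integral_atLeast_split[OF set_integrable_zeta_cross[OF that], of "real n" "real n + 1"]
      assms by (simp add: add.commute)
  ultimately show ?thesis
    using J_int_unfold[OF assms] assms unfolding J_expansion_def by (simp add: algebra_simps)
qed

lemma J_expansion_LIMSEQ_0:
  assumes "x \<ge> 1" "Re u > 1" "Re v > 1"
  shows "(\<lambda>k. J_expansion (k + x) u v) \<longlonglongrightarrow> 0"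
proof -
  have "filterlim (\<lambda>k. real (k + x)) at_top sequentially"
    by (intro filterlim_compose[OF filterlim_real_sequentially] filterlim_add_const_nat_at_top)
  then have "(\<lambda>k. complex_of_real (real (k + x)) powr (1 - u - v) / (u + v - 1)) \<longlonglongrightarrow> 0"
    using assms by (intro tendsto_divide_zero tendsto_neg_powr_complex_of_real) auto
  moreover have "(\<lambda>k. LINT \<beta>:{real (k + x)..}|lborel. zeta_cross a b \<beta>) \<longlonglongrightarrow> 0"
    if "Re a > 1" "Re b > 1" for a b
    using assms that
    by (intro set_integral_atLeast_LIMSEQ_0[OF set_integrable_zeta_cross, of a b "real x"]
        filterlim_compose[OF filterlim_real_sequentially filterlim_add_const_nat_at_top]) auto
  ultimately show ?thesis
    unfolding J_expansion_def using assms by (auto intro!: tendsto_add_zero)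
qed

theorem mainTheorem7:
  fixes x :: nat and u v :: complex
  assumes "x \<ge> 1" and "Re u > 1" and "Re v > 1"
  shows "set_integrable lborel {real x..}
           (\<lambda>\<alpha>. complex_of_real \<alpha> powr (- u) * zeta_tail 1 v \<alpha>)
       \<and> set_integrable lborel {real x..}
           (\<lambda>\<alpha>. complex_of_real \<alpha> powr (- v) * zeta_tail 1 u \<alpha>)
       \<and> J_int x u v =
           (of_nat x) powr (1 - u - v) / (u + v - 1)
           + (LINT \<alpha>:{real x..}|lborel. complex_of_real \<alpha> powr (- u) * zeta_tail 1 v \<alpha>)
           + (LINT \<alpha>:{real x..}|lborel. complex_of_real \<alpha> powr (- v) * zeta_tail 1 u \<alpha>)"
proof -
  define D where "D n = J_int n u v - J_expansion n u v" for n
  have "D (k + x) = D x" for k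
    by (induction k) (use J_int_minus_expansion_Suc assms in \<open>auto simp: D_def\<close>)
  moreover have "(\<lambda>k. D (k + x)) \<longlonglongrightarrow> 0 - 0"
    unfolding D_def using assms
    by (intro tendsto_diff LIMSEQ_ignore_initial_segment[OF J_int_LIMSEQ_0] J_expansion_LIMSEQ_0)
  ultimately have "J_int x u v = J_expansion x u v"
    unfolding D_def by (simp add: LIMSEQ_const_iff)
  moreover have "set_integrable lborel {real x..} (zeta_cross u v)"
    "set_integrable lborel {real x..} (zeta_cross v u)"
    using assms by (auto intro: set_integrable_zeta_cross)
  ultimately show ?thesis
    unfolding J_expansion_def zeta_cross_def[abs_def] by simp
qed

end
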